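(* Let $\iota:B\to A$ be an injective homomorphism of groups such that $\iota(B)$ is normal in $A$, and let $q:A\to B$ satisfy (ZL1), (ZL2), (ZL3). Then there is a subgroup $X$ of $A$ such that $A$ is the internal semidirect product $\iota(B)\rtimes X$ (i.e. $\iota(B)\trianglelefteq A$, $\iota(B)X=A$, $\iota(B)\cap X=\{1_A\}$) and $q$ is the projection onto the first factor: $q(\iota(b)x)=b$ for all $b\in B$, $x\in X$.
   Context: For a homomorphism $\iota:B\to A$, conditions on $q:A\to B$: (ZL1) $q(1_A)=1_B$; (ZL2) $q(\iota(b)a)=b\,q(a)$ for all $a\in A,b\in B$; (ZL3) $q(aa')=q(a\,\iota(q(a')))$ for all $a,a'\in A$. These maps are exactly the $\mathsf T^l_\iota$-algebra structures on $(B,m_B)$ (algebras for the monad $A\otimes_B-$ on left $B$-sets induced by $\iota$). *)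

theory Defs
  imports "HOL-Algebra.Algebra"
begin

end

theory Submission
  imports Defs
begin

text \<open>The complement is the fibre \<open>X = q\<inverse>(1)\<close>. By (ZL3), right multiplication by an element of \<open>X\<close>
  does not change \<open>q\<close>, which makes \<open>X\<close> a subgroup; (ZL1) and (ZL2) give \<open>q \<circ> \<iota> = id\<close> and
  \<open>q (\<iota> b \<otimes> x) = b\<close> for \<open>x \<in> X\<close>, and every \<open>a\<close> factors as \<open>\<iota> (q a) \<otimes> (\<iota> (q a)\<inverse> \<otimes> a)\<close>.\<close>

locale zl_map = group_hom B A \<iota>
  for B :: "('a, 'b) monoid_scheme" and A :: "('c, 'd) monoid_scheme" and \<iota> :: "'a \<Rightarrow> 'c" +
  fixes q :: "'c \<Rightarrow> 'a"
  assumes q_closed: "a \<in> carrier A \<Longrightarrow> q a \<in> carrier B"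
    and q_one: "q \<one>\<^bsub>A\<^esub> = \<one>\<^bsub>B\<^esub>"
    and q_left_linear: "\<lbrakk>a \<in> carrier A; b \<in> carrier B\<rbrakk> \<Longrightarrow> q (\<iota> b \<otimes>\<^bsub>A\<^esub> a) = b \<otimes>\<^bsub>B\<^esub> q a"
    and q_mult_iota_q: "\<lbrakk>a \<in> carrier A; a' \<in> carrier A\<rbrakk> \<Longrightarrow> q (a \<otimes>\<^bsub>A\<^esub> a') = q (a \<otimes>\<^bsub>A\<^esub> \<iota> (q a'))"
begin

definition complement :: "'c set"
  where "complement = {a \<in> carrier A. q a = \<one>\<^bsub>B\<^esub>}"

lemma complement_subset: "complement \<subseteq> carrier A"
  by (auto simp: complement_def)

lemma q_iota: "b \<in> carrier B \<Longrightarrow> q (\<iota> b) = b"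
  using q_left_linear[of "\<one>\<^bsub>A\<^esub>" b] q_one by simp

lemma q_iota_mult_complement:
  "\<lbrakk>b \<in> carrier B; x \<in> complement\<rbrakk> \<Longrightarrow> q (\<iota> b \<otimes>\<^bsub>A\<^esub> x) = b"
  by (auto simp: complement_def q_left_linear)

lemma q_mult_complement:
  "\<lbrakk>a \<in> carrier A; x \<in> complement\<rbrakk> \<Longrightarrow> q (a \<otimes>\<^bsub>A\<^esub> x) = q a"
  using q_mult_iota_q[of a x] by (simp add: complement_def)

lemma subgroup_complement: "subgroup complement A"
proof (rule H.subgroupI)
  show "complement \<subseteq> carrier A" by (rule complement_subset)
  show "complement \<noteq> {}" using q_one by (auto simp: complement_def)
next
  fix x assume x: "x \<in> complement"
  then have xA: "x \<in> carrier A" by (simp add: complement_def)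
  have "q (inv\<^bsub>A\<^esub> x) = q (inv\<^bsub>A\<^esub> x \<otimes>\<^bsub>A\<^esub> x)"
    using q_mult_complement[of "inv\<^bsub>A\<^esub> x" x] xA x by simp
  also have "\<dots> = \<one>\<^bsub>B\<^esub>" using xA q_one by simp
  finally show "inv\<^bsub>A\<^esub> x \<in> complement" using xA by (simp add: complement_def)
next
  fix x y assume "x \<in> complement" "y \<in> complement"
  then show "x \<otimes>\<^bsub>A\<^esub> y \<in> complement"
    using q_mult_complement[of x y] by (simp add: complement_def)
qed

lemma iota_image_mult_complement: "set_mult A (\<iota> ` carrier B) complement = carrier A"
proof
  show "set_mult A (\<iota> ` carrier B) complement \<subseteq> carrier A"
    by (auto simp: set_mult_def complement_def)
next
  show "carrier A \<subseteq> set_mult A (\<iota> ` carrier B) complement"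
  proof
    fix a assume aA: "a \<in> carrier A"
    then have qa: "q a \<in> carrier B" by (rule q_closed)
    define x where "x = \<iota> (inv\<^bsub>B\<^esub> q a) \<otimes>\<^bsub>A\<^esub> a"
    have "x \<in> complement"
      using aA qa q_left_linear[of a "inv\<^bsub>B\<^esub> q a"] by (simp add: x_def complement_def)
    moreover have "a = \<iota> (q a) \<otimes>\<^bsub>A\<^esub> x"
      using aA qa by (simp add: x_def hom_inv H.m_assoc[symmetric])
    ultimately show "a \<in> set_mult A (\<iota> ` carrier B) complement"
      using qa unfolding set_mult_def by blast
  qed
qed

lemma iota_image_inter_complement: "\<iota> ` carrier B \<inter> complement = {\<one>\<^bsub>A\<^esub>}"
  using q_iota q_one by (force simp: complement_def)

end

theorem proposition4p5:
  fixes B :: "('a, 'b) monoid_scheme" and \<iota> :: "'a \<Rightarrow> 'c" and A :: "('c, 'd) monoid_scheme"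
    and q :: "'c \<Rightarrow> 'a"
  assumes grpB: "group B" and grpA: "group A"
    and hom: "\<iota> \<in> hom B A"
    and inj: "inj_on \<iota> (carrier B)"
    and nrm: "\<iota> ` carrier B \<lhd> A"
    and q_carrier: "\<forall>a \<in> carrier A. q a \<in> carrier B"
    and ZL1: "q \<one>\<^bsub>A\<^esub> = \<one>\<^bsub>B\<^esub>"
    and ZL2: "\<forall>a \<in> carrier A. \<forall>b \<in> carrier B.
                 q (\<iota> b \<otimes>\<^bsub>A\<^esub> a) = b \<otimes>\<^bsub>B\<^esub> q a"
    and ZL3: "\<forall>a \<in> carrier A. \<forall>a' \<in> carrier A.
                 q (a \<otimes>\<^bsub>A\<^esub> a') = q (a \<otimes>\<^bsub>A\<^esub> \<iota> (q a'))"
  shows "\<exists>H. subgroup H A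
            \<and> set_mult A (\<iota> ` carrier B) H = carrier A
            \<and> \<iota> ` carrier B \<inter> H = {\<one>\<^bsub>A\<^esub> }
            \<and> (\<forall>b \<in> carrier B. \<forall>x \<in> H. q (\<iota> b \<otimes>\<^bsub>A\<^esub> x) = b)"
proof -
  have "group_hom B A \<iota>"
    using grpA grpB hom by (simp add: group_hom_def group_hom_axioms_def)
  then interpret zl_map B A \<iota> q
    using q_carrier ZL1 ZL2 ZL3 by (simp add: zl_map_def zl_map_axioms_def)
  show ?thesis
    using subgroup_complement iota_image_mult_complement iota_image_inter_complement
      q_iota_mult_complement
    by blast
qed

end
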